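(* Let $\Gamma$ be a regular axis-parallel square grid in the plane whose squares have diameter $1$ (side length $1/\sqrt{2}$), and call the open squares of $\Gamma$ cells. Consider two cells $\pi$ and $\pi'$. Let $p_1,p_2$ be any two points in $\pi'$ and $p_3,p_4$ be any two points in $\pi$. For points $x,y$ let $D(x,y)$ denote the closed disk having segment $xy$ as a diameter, and let $\mathcal{D}=D(p_1,p_2)\cup D(p_2,p_3)\cup D(p_3,p_4)$. Then: 1. If $|p_2p_3|\le 1/\sqrt{2}$, then $\mathcal{D}$ intersects at most $8$ cells. 2. If $|p_2p_3|\le 1$ and $\pi,\pi'$ are $+$-neighbors, then $\mathcal{D}$ intersects at most $8$ cells. 3. If $|p_2p_3|\le 1$ and $\pi,\pi'$ are $\times$-neighbors, then $\mathcal{D}$ intersects at most $10$ cells. 4. If $|p_2p_3|\le 1$ and $\pi,\pi'$ are not neighbors, then $\mathcal{D}$ intersects at most $11$ cells.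
   Context: The neighbors of a cell $\pi$ are the eight cells sharing a side or a corner with $\pi$. These are partitioned into the four $+$-neighbors (cells sharing a side with $\pi$) and the four $\times$-neighbors (cells sharing exactly one grid point with $\pi$). Cells are open (they do not contain their boundary), and disks are closed. *)

theory Defs
  imports "HOL-Analysis.Analysis"
begin

definition side :: real where "side = 1 / sqrt 2"

text \<open>The regular axis-parallel grid with offset (a,b): the open cell with integer index (i,j).\<close>
definition cell :: "real \<times> real \<Rightarrow> int \<times> int \<Rightarrow> (real \<times> real) set" where
  "cell off ij = {p. fst off + of_int (fst ij) * side < fst p \<and> fst p < fst off + of_int (fst ij + 1) * side
                  \<and> snd off + of_int (snd ij) * side < snd p \<and> snd p < snd off + of_int (snd ij + 1) * side}"

definition diskD :: "real \<times> real \<Rightarrow> real \<times> real \<Rightarrow> (real \<times> real) set" where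
  "diskD x y = cball (midpoint x y) (dist x y / 2)"

definition cells_hit :: "real \<times> real \<Rightarrow> (real \<times> real) set \<Rightarrow> (int \<times> int) set" where
  "cells_hit off S = {ij. cell off ij \<inter> S \<noteq> {}}"

definition plus_nb :: "int \<times> int \<Rightarrow> int \<times> int \<Rightarrow> bool" where
  "plus_nb c c' \<longleftrightarrow> \<bar>fst c - fst c'\<bar> + \<bar>snd c - snd c'\<bar> = 1"

definition times_nb :: "int \<times> int \<Rightarrow> int \<times> int \<Rightarrow> bool" where
  "times_nb c c' \<longleftrightarrow> \<bar>fst c - fst c'\<bar> = 1 \<and> \<bar>snd c - snd c'\<bar> = 1"

definition nb :: "int \<times> int \<Rightarrow> int \<times> int \<Rightarrow> bool" where
  "nb c c' \<longleftrightarrow> plus_nb c c' \<or> times_nb c c'"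

end

theory Submission
  imports Defs
begin

text \<open>
  After rescaling by \<open>sqrt 2\<close> the grid becomes the integer grid and the two distance hypotheses
  become \<open>|p2 p3| \<le> 1\<close> and \<open>|p2 p3| \<le> sqrt 2\<close>. By Thales, \<open>D(x, y)\<close> is the set of points
  \<open>z\<close> with \<open>(x - z) \<bullet> (y - z) \<le> 0\<close>. Hence a disk spanned by two points of one cell meets only
  that cell and its four \<open>+\<close>-neighbours, and it remains to count the cells met by the middle
  disk \<open>D(p2, p3)\<close> outside these two plus-shaped stars. Every such cell lies within distance
  \<open>|p2 p3| / 2\<close> of the midpoint in each coordinate, lies between \<open>p2\<close> and \<open>p3\<close> in some
  coordinate, is not farther than 1 from both \<open>p2\<close> and \<open>p3\<close> (Pythagoras), and no two of them
  are three cells apart (the disk has diameter \<open>< 2\<close>). Using translations, reflections and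
  the diagonal swap we may assume \<open>\<pi>' = (0, 0)\<close> and \<open>\<pi> = (i, j)\<close> with \<open>0 \<le> j \<le> i\<close>, which
  leaves the five positions \<open>(0, 0), (1, 0), (1, 1), (2, 0), (2, 1)\<close>; there the constraints are
  checked cell by cell.
\<close>

section \<open>Disks with a given diameter\<close>

lemma mem_diskD_iff_inner: "z \<in> diskD p q \<longleftrightarrow> inner (p - z) (q - z) \<le> 0"
proof -
  have "4 * (dist (midpoint p q) z)\<^sup>2 - (dist p q)\<^sup>2 = 4 * inner (p - z) (q - z)"
    unfolding dist_norm power2_norm_eq_inner midpoint_def
    by (simp add: inner_simps inner_commute algebra_simps)
  moreover have "dist (midpoint p q) z \<le> dist p q / 2 \<longleftrightarrow> (dist (midpoint p q) z)\<^sup>2 \<le> (dist p q / 2)\<^sup>2"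
    by (simp add: abs_le_square_iff)
  ultimately show ?thesis
    unfolding diskD_def mem_cball by (simp add: power_divide) linarith
qed

lemma diskD_pythagoras:
  assumes "z \<in> diskD p q"
  shows "(dist p z)\<^sup>2 + (dist q z)\<^sup>2 \<le> (dist p q)\<^sup>2"
proof -
  have "(dist p q)\<^sup>2 = (dist p z)\<^sup>2 + (dist q z)\<^sup>2 - 2 * inner (p - z) (q - z)"
    unfolding dist_norm power2_norm_eq_inner
    by (simp add: inner_simps inner_commute algebra_simps)
  with assms show ?thesis
    unfolding mem_diskD_iff_inner by linarith
qed

lemma diskD_diameter:
  assumes "z \<in> diskD p q" "w \<in> diskD p q"
  shows "dist z w \<le> dist p q"
  using assms dist_triangle[of z w "midpoint p q"] unfolding diskD_def mem_cball by (simp add: dist_commute)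

lemma diskD_coord_near_midpoint:
  assumes "z \<in> diskD p q"
  shows "\<bar>2 * fst z - fst p - fst q\<bar> \<le> dist p q" "\<bar>2 * snd z - snd p - snd q\<bar> \<le> dist p q"
proof -
  have "\<bar>2 * fst z - fst p - fst q\<bar> = 2 * dist (fst (midpoint p q)) (fst z)"
    "\<bar>2 * snd z - snd p - snd q\<bar> = 2 * dist (snd (midpoint p q)) (snd z)"
    by (simp_all add: dist_real_def midpoint_def abs_if field_simps)
  moreover have "dist (fst (midpoint p q)) (fst z) \<le> dist p q / 2" "dist (snd (midpoint p q)) (snd z) \<le> dist p q / 2"
    using assms dist_fst_le dist_snd_le order_trans unfolding diskD_def mem_cball by blast+
  ultimately show "\<bar>2 * fst z - fst p - fst q\<bar> \<le> dist p q" "\<bar>2 * snd z - snd p - snd q\<bar> \<le> dist p q"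
    by simp_all
qed

lemma diskD_coord_between:
  assumes "z \<in> diskD p q"
  shows "(fst p - fst z) * (fst q - fst z) \<le> 0 \<or> (snd p - snd z) * (snd q - snd z) \<le> 0"
  using assms unfolding mem_diskD_iff_inner inner_prod_def by auto

lemma dist_prod_sq: "(dist p q)\<^sup>2 = (fst p - fst q)\<^sup>2 + (snd p - snd q)\<^sup>2"
  by (cases p, cases q) (simp add: dist_Pair_Pair dist_real_def)

lemma dist_lt_2_if_dist_sq_le_2: "(dist p q)\<^sup>2 \<le> 2 \<Longrightarrow> dist p q < 2"
  by (rule power2_less_imp_less) simp_all

section \<open>Cells of the unit grid met by such disks\<close>

definition unit_cell :: "int \<times> int \<Rightarrow> (real \<times> real) set" where
  "unit_cell c = {z. of_int (fst c) < fst z \<and> fst z < of_int (fst c) + 1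
                   \<and> of_int (snd c) < snd z \<and> snd z < of_int (snd c) + 1}"

definition unit_cells_hit :: "(real \<times> real) set \<Rightarrow> (int \<times> int) set" where
  "unit_cells_hit S = {c. unit_cell c \<inter> S \<noteq> {}}"

lemma mem_unit_cell_iff:
  "z \<in> unit_cell (k, l) \<longleftrightarrow> of_int k < fst z \<and> fst z < of_int k + 1 \<and> of_int l < snd z \<and> snd z < of_int l + 1"
  by (simp add: unit_cell_def)

lemma unit_cell_floor: "z \<in> unit_cell (k, l) \<Longrightarrow> \<lfloor>fst z\<rfloor> = k \<and> \<lfloor>snd z\<rfloor> = l"
  by (simp add: mem_unit_cell_iff floor_eq_iff)

lemma unit_cells_hit_Un: "unit_cells_hit (A \<union> B) = unit_cells_hit A \<union> unit_cells_hit B"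
  by (auto simp: unit_cells_hit_def)

lemma unit_cells_coord_gap:
  assumes "p \<in> unit_cell (a, b)" "q \<in> unit_cell (k, l)"
  shows "of_int \<bar>k - a\<bar> - 1 < \<bar>fst q - fst p\<bar>" "of_int \<bar>l - b\<bar> - 1 < \<bar>snd q - snd p\<bar>"
  using assms unfolding mem_unit_cell_iff by (simp_all add: abs_if)

lemma unit_cells_dist_gap:
  assumes "p \<in> unit_cell (a, b)" "q \<in> unit_cell (k, l)"
  shows "of_int \<bar>k - a\<bar> - 1 < dist p q" "of_int \<bar>l - b\<bar> - 1 < dist p q"
  using unit_cells_coord_gap[OF assms] dist_fst_le[of p q] dist_snd_le[of p q]
  by (simp_all add: dist_real_def abs_minus_commute)

lemma unit_cell_dist_sq_lt_2:
  assumes "p \<in> unit_cell c" "q \<in> unit_cell c"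
  shows "(dist p q)\<^sup>2 < 2"
proof -
  have "\<bar>fst p - fst q\<bar> < 1" "\<bar>snd p - snd q\<bar> < 1"
    using assms by (cases c; auto simp: mem_unit_cell_iff)+
  then have "(fst p - fst q)\<^sup>2 < 1" "(snd p - snd q)\<^sup>2 < 1"
    by (simp_all add: abs_square_less_1)
  then show ?thesis
    unfolding dist_prod_sq by linarith
qed

lemma diskD_hit_index_near_midpoint:
  assumes "p \<in> unit_cell (a, b)" "q \<in> unit_cell (i, j)" "(k, l) \<in> unit_cells_hit (diskD p q)"
  shows "of_int \<bar>2 * k - a - i\<bar> < 2 + dist p q" "of_int \<bar>2 * l - b - j\<bar> < 2 + dist p q"
proof -
  obtain z where z: "z \<in> unit_cell (k, l)" "z \<in> diskD p q"
    using assms(3) unfolding unit_cells_hit_def by blast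
  show "of_int \<bar>2 * k - a - i\<bar> < 2 + dist p q" "of_int \<bar>2 * l - b - j\<bar> < 2 + dist p q"
    using diskD_coord_near_midpoint[OF z(2)] assms(1,2) z(1) unfolding mem_unit_cell_iff
    by (auto simp: abs_le_iff abs_less_iff)
qed

lemma diskD_hit_index_between:
  assumes "p \<in> unit_cell (a, b)" "q \<in> unit_cell (i, j)" "(k, l) \<in> unit_cells_hit (diskD p q)"
  shows "min a i \<le> k \<and> k \<le> max a i \<or> min b j \<le> l \<and> l \<le> max b j"
proof -
  obtain z where z: "z \<in> unit_cell (k, l)" "z \<in> diskD p q"
    using assms(3) unfolding unit_cells_hit_def by blast
  have floors: "\<lfloor>fst p\<rfloor> = a" "\<lfloor>snd p\<rfloor> = b" "\<lfloor>fst q\<rfloor> = i" "\<lfloor>snd q\<rfloor> = j"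
    "\<lfloor>fst z\<rfloor> = k" "\<lfloor>snd z\<rfloor> = l"
    using unit_cell_floor assms(1,2) z(1) by blast+
  have "fst p \<le> fst z \<and> fst z \<le> fst q \<or> fst q \<le> fst z \<and> fst z \<le> fst p
      \<or> snd p \<le> snd z \<and> snd z \<le> snd q \<or> snd q \<le> snd z \<and> snd z \<le> snd p"
    using diskD_coord_between[OF z(2)] by (auto simp: mult_le_0_iff)
  then show ?thesis
    using floor_mono floors by (smt (verit))
qed

lemma diskD_hit_index_far:
  assumes "p \<in> unit_cell (a, b)" "q \<in> unit_cell (i, j)" "(k, l) \<in> unit_cells_hit (diskD p q)"
    and "(dist p q)\<^sup>2 \<le> 2"
  shows "\<not> ((2 \<le> \<bar>k - a\<bar> \<or> 2 \<le> \<bar>l - b\<bar>) \<and> (2 \<le> \<bar>k - i\<bar> \<or> 2 \<le> \<bar>l - j\<bar>))"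
proof
  assume far: "(2 \<le> \<bar>k - a\<bar> \<or> 2 \<le> \<bar>l - b\<bar>) \<and> (2 \<le> \<bar>k - i\<bar> \<or> 2 \<le> \<bar>l - j\<bar>)"
  obtain z where z: "z \<in> unit_cell (k, l)" "z \<in> diskD p q"
    using assms(3) unfolding unit_cells_hit_def by blast
  have "1 < dist p z" "1 < dist q z"
    using far unit_cells_dist_gap[OF assms(1) z(1)] unit_cells_dist_gap[OF assms(2) z(1)] by linarith+
  then have "1 < (dist p z)\<^sup>2" "1 < (dist q z)\<^sup>2"
    by (simp_all add: less_1_mult power2_eq_square)
  then show False
    using diskD_pythagoras[OF z(2)] assms(4) by linarith
qed

lemma diskD_hit_index_constraints:
  assumes "p \<in> unit_cell (a, b)" "q \<in> unit_cell (i, j)" "(k, l) \<in> unit_cells_hit (diskD p q)"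
    and "(dist p q)\<^sup>2 \<le> 2"
  shows "\<bar>2 * k - a - i\<bar> \<le> 3 \<and> \<bar>2 * l - b - j\<bar> \<le> 3
    \<and> (min a i \<le> k \<and> k \<le> max a i \<or> min b j \<le> l \<and> l \<le> max b j)
    \<and> \<not> ((2 \<le> \<bar>k - a\<bar> \<or> 2 \<le> \<bar>l - b\<bar>) \<and> (2 \<le> \<bar>k - i\<bar> \<or> 2 \<le> \<bar>l - j\<bar>))"
proof -
  have "real_of_int \<bar>2 * k - a - i\<bar> < of_int 4" "real_of_int \<bar>2 * l - b - j\<bar> < of_int 4"
    using diskD_hit_index_near_midpoint[OF assms(1-3)] dist_lt_2_if_dist_sq_le_2[OF assms(4)] by simp_all
  then have "\<bar>2 * k - a - i\<bar> \<le> 3 \<and> \<bar>2 * l - b - j\<bar> \<le> 3"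
    unfolding of_int_less_iff by linarith
  then show ?thesis
    using diskD_hit_index_between[OF assms(1-3)] diskD_hit_index_far[OF assms] by blast
qed

lemma diskD_diagonal_hits:
  assumes "p \<in> unit_cell (0, 0)" "q \<in> unit_cell (1, 1)" "dist p q \<le> 1"
  shows "unit_cells_hit (diskD p q) \<subseteq> {(0, 0), (0, 1), (1, 0), (1, 1)}"
proof (rule subrelI)
  fix k l assume "(k, l) \<in> unit_cells_hit (diskD p q)"
  then have "real_of_int \<bar>2 * k - 1\<bar> < of_int 3" "real_of_int \<bar>2 * l - 1\<bar> < of_int 3"
    using diskD_hit_index_near_midpoint[OF assms(1,2), of k l] assms(3) by simp_all
  then have "k \<in> {0, 1}" "l \<in> {0, 1}"
    unfolding of_int_less_iff by (simp_all add: abs_less_iff) presburger+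
  then show "(k, l) \<in> {(0, 0), (0, 1), (1, 0), (1, 1)}"
    by auto
qed

definition plus_star :: "int \<times> int \<Rightarrow> (int \<times> int) set" where
  "plus_star c = {c, (fst c - 1, snd c), (fst c + 1, snd c), (fst c, snd c - 1), (fst c, snd c + 1)}"

lemma diskD_same_cell_hits:
  assumes "p \<in> unit_cell c" "q \<in> unit_cell c"
  shows "unit_cells_hit (diskD p q) \<subseteq> plus_star c"
proof (rule subrelI)
  fix k l assume "(k, l) \<in> unit_cells_hit (diskD p q)"
  moreover obtain a b where c: "c = (a, b)" by fastforce
  ultimately have "\<bar>2 * k - a - a\<bar> \<le> 3 \<and> \<bar>2 * l - b - b\<bar> \<le> 3 \<and> (k = a \<or> l = b)"
    using diskD_hit_index_constraints[of p a b q a b k l] assms unit_cell_dist_sq_lt_2[OF assms] by auto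
  then have "k = a \<and> (l = b - 1 \<or> l = b \<or> l = b + 1) \<or> l = b \<and> (k = a - 1 \<or> k = a + 1)"
    by (auto simp: abs_le_iff)
  then show "(k, l) \<in> plus_star c"
    unfolding c plus_star_def by auto
qed

definition disk_chain :: "real \<times> real \<Rightarrow> real \<times> real \<Rightarrow> real \<times> real \<Rightarrow> real \<times> real \<Rightarrow> (real \<times> real) set" where
  "disk_chain p1 p2 p3 p4 = diskD p1 p2 \<union> diskD p2 p3 \<union> diskD p3 p4"

lemma disk_chain_hits_subset:
  assumes "p1 \<in> unit_cell c'" "p2 \<in> unit_cell c'" "p3 \<in> unit_cell c" "p4 \<in> unit_cell c"
  shows "unit_cells_hit (disk_chain p1 p2 p3 p4) \<subseteq> plus_star c' \<union> plus_star c \<union> unit_cells_hit (diskD p2 p3)"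
  using diskD_same_cell_hits[OF assms(1,2)] diskD_same_cell_hits[OF assms(3,4)]
  unfolding disk_chain_def unit_cells_hit_Un by blast

lemma diskD_hits_not_far_apart:
  assumes "dist p q < 2" "3 \<le> \<bar>k1 - k2\<bar> \<or> 3 \<le> \<bar>l1 - l2\<bar>"
  shows "\<not> {(k1, l1), (k2, l2)} \<subseteq> unit_cells_hit (diskD p q)"
proof
  assume "{(k1, l1), (k2, l2)} \<subseteq> unit_cells_hit (diskD p q)"
  then obtain z1 z2 where z: "z1 \<in> unit_cell (k1, l1)" "z1 \<in> diskD p q" "z2 \<in> unit_cell (k2, l2)" "z2 \<in> diskD p q"
    unfolding unit_cells_hit_def by blast
  have "real_of_int \<bar>k1 - k2\<bar> < of_int 3" "real_of_int \<bar>l1 - l2\<bar> < of_int 3"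
    using unit_cells_dist_gap[OF z(3,1)] diskD_diameter[OF z(2,4)] assms(1) by (simp_all add: dist_commute)
  then show False
    using assms(2) unfolding of_int_less_iff by linarith
qed

lemma card_plus_star: "finite (plus_star c) \<and> card (plus_star c) = 5"
  by (cases c) (simp add: plus_star_def)

lemma disk_chain_hits_same_cell:
  assumes "p1 \<in> unit_cell c" "p2 \<in> unit_cell c" "p3 \<in> unit_cell c" "p4 \<in> unit_cell c"
  shows "unit_cells_hit (disk_chain p1 p2 p3 p4) \<subseteq> plus_star c"
  using disk_chain_hits_subset[OF assms] diskD_same_cell_hits[OF assms(2,3)] by blast

lemma finite_card_le_if_subset_Un:
  assumes "H \<subseteq> N \<union> E" "finite N" "finite E" "card N + card E \<le> n"
  shows "finite H \<and> card H \<le> n"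
  using card_mono[OF _ assms(1)] card_Un_le[of N E] assms(2-4) finite_subset[OF assms(1)] by fastforce

lemma card_Int_doubleton_le_1:
  assumes "\<not> {x, y} \<subseteq> E"
  shows "card (E \<inter> {x, y}) \<le> 1"
proof -
  have "E \<inter> {x, y} \<subseteq> {x} \<or> E \<inter> {x, y} \<subseteq> {y}"
    using assms by blast
  then show ?thesis
    using card_mono[of "{x}" "E \<inter> {x, y}"] card_mono[of "{y}" "E \<inter> {x, y}"] by auto
qed

text \<open>The parameter \<open>d\<close> is the unit-grid distance of \<open>p2\<close> and \<open>p3\<close>, so \<open>d \<le> 1\<close> is the
  hypothesis \<open>|p2 p3| \<le> 1 / sqrt 2\<close> of the original grid.\<close>

definition hit_count_bound :: "int \<times> int \<Rightarrow> int \<times> int \<Rightarrow> real \<Rightarrow> (int \<times> int) set \<Rightarrow> bool" where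
  "hit_count_bound c' c d H \<longleftrightarrow> finite H \<and> card H \<le> 11 \<and> (d \<le> 1 \<longrightarrow> card H \<le> 8)
     \<and> (plus_nb c c' \<longrightarrow> card H \<le> 8) \<and> (times_nb c c' \<longrightarrow> card H \<le> 10)"

context
  fixes p1 p2 p3 p4 :: "real \<times> real"
  assumes p1: "p1 \<in> unit_cell (0, 0)" and p2: "p2 \<in> unit_cell (0, 0)"
    and close: "(dist p2 p3)\<^sup>2 \<le> 2"
begin

abbreviation (input) hits :: "(int \<times> int) set" where
  "hits \<equiv> unit_cells_hit (disk_chain p1 p2 p3 p4)"

lemma hit_count_bound_same_cell:
  assumes "p3 \<in> unit_cell (0, 0)" "p4 \<in> unit_cell (0, 0)"
  shows "hit_count_bound (0, 0) (0, 0) (dist p2 p3) hits"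
  using finite_card_le_if_subset_Un[of hits "plus_star (0, 0)" "{}" 5]
    disk_chain_hits_same_cell[OF p1 p2 assms] card_plus_star
  by (simp add: hit_count_bound_def)

lemma hit_count_bound_plus_nb:
  assumes p3: "p3 \<in> unit_cell (1, 0)" and p4: "p4 \<in> unit_cell (1, 0)"
  shows "hit_count_bound (0, 0) (1, 0) (dist p2 p3) hits"
proof -
  define S :: "(int \<times> int) set" where "S = {(-1, 0), (0, -1), (0, 0), (0, 1), (1, -1), (1, 0), (1, 1), (2, 0)}"
  have "unit_cells_hit (diskD p2 p3) \<subseteq> S"
  proof (rule subrelI)
    fix k l assume "(k, l) \<in> unit_cells_hit (diskD p2 p3)"
    note C = diskD_hit_index_constraints[OF p2 p3 this close]
    then have "k \<in> {-1, 0, 1, 2}" "l \<in> {-1, 0, 1}"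
      by (simp_all add: abs_le_iff) presburger+
    then show "(k, l) \<in> S"
      using C unfolding S_def by (elim insertE emptyE; simp)
  qed
  moreover have "plus_star (0, 0) \<union> plus_star (1, 0) \<subseteq> S"
    unfolding S_def plus_star_def by simp
  ultimately have "hits \<subseteq> S \<union> {}"
    using disk_chain_hits_subset[OF p1 p2 p3 p4] by blast
  moreover have "finite S" "card S = 8"
    unfolding S_def by simp_all
  ultimately show ?thesis
    using finite_card_le_if_subset_Un[of hits S "{}" 8] by (simp add: hit_count_bound_def)
qed

lemma hit_count_bound_times_nb:
  assumes p3: "p3 \<in> unit_cell (1, 1)" and p4: "p4 \<in> unit_cell (1, 1)"
  shows "hit_count_bound (0, 0) (1, 1) (dist p2 p3) hits"
proof -
  define M where "M = unit_cells_hit (diskD p2 p3)"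
  define N :: "(int \<times> int) set" where "N = {(-1, 0), (0, -1), (0, 0), (0, 1), (1, 0), (1, 1), (1, 2), (2, 1)}"
  define A :: "(int \<times> int) set" where "A = {(1, -1), (0, 2)}"
  define B :: "(int \<times> int) set" where "B = {(-1, 1), (2, 0)}"
  have stars: "plus_star (0, 0) \<union> plus_star (1, 1) \<subseteq> N"
    unfolding N_def plus_star_def by simp
  have "M - N \<subseteq> A \<union> B"
  proof (rule subrelI)
    fix k l assume "(k, l) \<in> M - N"
    note C = diskD_hit_index_constraints[OF p2 p3 _ close, of k l] this[unfolded M_def N_def]
    then have "k \<in> {-1, 0, 1, 2}" "l \<in> {-1, 0, 1, 2}"
      by (simp_all add: abs_le_iff) presburger+
    then show "(k, l) \<in> A \<union> B"
      using C unfolding A_def B_def by (elim insertE emptyE; simp)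
  qed
  then have "hits \<subseteq> N \<union> (M \<inter> A \<union> M \<inter> B)"
    using disk_chain_hits_subset[OF p1 p2 p3 p4] stars unfolding M_def by blast
  moreover have "card (M \<inter> A) \<le> 1" "card (M \<inter> B) \<le> 1"
    unfolding M_def A_def B_def
    by (rule card_Int_doubleton_le_1, rule diskD_hits_not_far_apart[OF dist_lt_2_if_dist_sq_le_2[OF close]],
        simp)+
  then have "card (M \<inter> A \<union> M \<inter> B) \<le> 2"
    using card_Un_le[of "M \<inter> A" "M \<inter> B"] by linarith
  moreover have "finite N" "card N = 8" "finite (M \<inter> A \<union> M \<inter> B)"
    unfolding N_def A_def B_def by simp_all
  ultimately have "finite hits \<and> card hits \<le> 10"
    using finite_card_le_if_subset_Un[of hits N "M \<inter> A \<union> M \<inter> B" 10] by simp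
  moreover have "finite hits \<and> card hits \<le> 8" if "dist p2 p3 \<le> 1"
  proof -
    have "{(0, 0), (0, 1), (1, 0), (1, 1)} \<subseteq> N"
      unfolding N_def by simp
    then have "hits \<subseteq> N \<union> {}"
      using disk_chain_hits_subset[OF p1 p2 p3 p4] stars diskD_diagonal_hits[OF p2 p3 that] by blast
    from finite_card_le_if_subset_Un[OF this \<open>finite N\<close>, of 8] show ?thesis
      using \<open>card N = 8\<close> by simp
  qed
  ultimately show ?thesis
    by (simp add: hit_count_bound_def times_nb_def plus_nb_def)
qed

lemma hit_count_bound_two_apart:
  assumes p3: "p3 \<in> unit_cell (2, 0)" and p4: "p4 \<in> unit_cell (2, 0)"
  shows "hit_count_bound (0, 0) (2, 0) (dist p2 p3) hits"
proof -
  define S :: "(int \<times> int) set" where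
    "S = {(-1, 0), (0, -1), (0, 0), (0, 1), (1, -1), (1, 0), (1, 1), (2, -1), (2, 0), (2, 1), (3, 0)}"
  have "unit_cells_hit (diskD p2 p3) \<subseteq> S"
  proof (rule subrelI)
    fix k l assume "(k, l) \<in> unit_cells_hit (diskD p2 p3)"
    note C = diskD_hit_index_constraints[OF p2 p3 this close]
    then have "k \<in> {0, 1, 2}" "l \<in> {-1, 0, 1}"
      by (simp_all add: abs_le_iff) presburger+
    then show "(k, l) \<in> S"
      using C unfolding S_def by (elim insertE emptyE; simp)
  qed
  moreover have "plus_star (0, 0) \<union> plus_star (2, 0) \<subseteq> S"
    unfolding S_def plus_star_def by simp
  ultimately have "hits \<subseteq> S \<union> {}"
    using disk_chain_hits_subset[OF p1 p2 p3 p4] by blast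
  moreover have "finite S" "card S = 11"
    unfolding S_def by simp_all
  moreover have "1 < dist p2 p3"
    using unit_cells_dist_gap(1)[OF p2 p3] by simp
  ultimately show ?thesis
    using finite_card_le_if_subset_Un[of hits S "{}" 11]
    by (simp add: hit_count_bound_def times_nb_def plus_nb_def)
qed

lemma hit_count_bound_knight_apart:
  assumes p3: "p3 \<in> unit_cell (2, 1)" and p4: "p4 \<in> unit_cell (2, 1)"
  shows "hit_count_bound (0, 0) (2, 1) (dist p2 p3) hits"
proof -
  define M where "M = unit_cells_hit (diskD p2 p3)"
  define N :: "(int \<times> int) set" where
    "N = {(-1, 0), (0, -1), (0, 0), (0, 1), (1, 0), (1, 1), (2, 0), (2, 1), (2, 2), (3, 1)}"
  define A :: "(int \<times> int) set" where "A = {(1, -1), (1, 2)}"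
  have hits_sub: "hits \<subseteq> N \<union> (M \<inter> A)"
  proof -
    have "M - N \<subseteq> A"
    proof (rule subrelI)
      fix k l assume "(k, l) \<in> M - N"
      note C = diskD_hit_index_constraints[OF p2 p3 _ close, of k l] this[unfolded M_def N_def]
      then have "k \<in> {0, 1, 2}" "l \<in> {-1, 0, 1, 2}"
        by (simp_all add: abs_le_iff) presburger+
      then show "(k, l) \<in> A"
        using C unfolding A_def by (elim insertE emptyE; simp)
    qed
    moreover have "plus_star (0, 0) \<union> plus_star (2, 1) \<subseteq> N"
      unfolding N_def plus_star_def by simp
    ultimately show ?thesis
      using disk_chain_hits_subset[OF p1 p2 p3 p4] unfolding M_def by blast
  qed
  have "card (M \<inter> A) \<le> 1"
    unfolding M_def A_def
    by (rule card_Int_doubleton_le_1, rule diskD_hits_not_far_apart[OF dist_lt_2_if_dist_sq_le_2[OF close]])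
      simp
  moreover have "finite N" "card N = 10" "finite (M \<inter> A)"
    unfolding N_def A_def by simp_all
  moreover have "1 < dist p2 p3"
    using unit_cells_dist_gap(1)[OF p2 p3] by simp
  ultimately show ?thesis
    using finite_card_le_if_subset_Un[OF hits_sub, of 11]
    by (simp add: hit_count_bound_def times_nb_def plus_nb_def)
qed

lemma hit_count_bound_first_octant:
  assumes p3: "p3 \<in> unit_cell (i, j)" and p4: "p4 \<in> unit_cell (i, j)" and "0 \<le> j" "j \<le> i"
  shows "hit_count_bound (0, 0) (i, j) (dist p2 p3) hits"
proof -
  have "real_of_int \<bar>i\<bar> < of_int 3"
    using unit_cells_dist_gap(1)[OF p2 p3] dist_lt_2_if_dist_sq_le_2[OF close] by simp
  then have "i \<le> 2"
    unfolding of_int_less_iff by linarith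
  moreover have "\<not> (i = 2 \<and> j = 2)"
  proof
    assume "i = 2 \<and> j = 2"
    then have "1 < \<bar>fst p3 - fst p2\<bar>" "1 < \<bar>snd p3 - snd p2\<bar>"
      using unit_cells_coord_gap[OF p2 p3] by simp_all
    then have "1 < (fst p3 - fst p2)\<^sup>2" "1 < (snd p3 - snd p2)\<^sup>2"
      using less_1_mult by (fastforce simp: power2_eq_square)+
    then show False
      using close unfolding dist_prod_sq by (simp add: power2_commute)
  qed
  ultimately have "i = 0 \<and> j = 0 \<or> i = 1 \<and> j = 0 \<or> i = 1 \<and> j = 1 \<or> i = 2 \<and> j = 0 \<or> i = 2 \<and> j = 1"
    using assms(3,4) by presburger
  then consider "i = 0" "j = 0" | "i = 1" "j = 0" | "i = 1" "j = 1" | "i = 2" "j = 0" | "i = 2" "j = 1"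
    by (elim disjE conjE) simp_all
  then show ?thesis
  proof cases
    case 1 then show ?thesis using hit_count_bound_same_cell p3 p4 by simp
  next
    case 2 then show ?thesis using hit_count_bound_plus_nb p3 p4 by simp
  next
    case 3 then show ?thesis using hit_count_bound_times_nb p3 p4 by simp
  next
    case 4 then show ?thesis using hit_count_bound_two_apart p3 p4 by simp
  next
    case 5 then show ?thesis using hit_count_bound_knight_apart p3 p4 by simp
  qed
qed

end

section \<open>Grid symmetries\<close>

lemma image_diskD_similarity:
  assumes "surj T" and "r > 0" and dist_T: "\<And>x y. dist (T x) (T y) = r * dist x y"
    and midpoint_T: "\<And>x y. T (midpoint x y) = midpoint (T x) (T y)"
  shows "T ` diskD p q = diskD (T p) (T q)"
proof -
  have "T ` cball m s = cball (T m) (r * s)" for m s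
  proof
    show "T ` cball m s \<subseteq> cball (T m) (r * s)"
      using \<open>r > 0\<close> by (auto simp: dist_T)
    show "cball (T m) (r * s) \<subseteq> T ` cball m s"
    proof
      fix y assume "y \<in> cball (T m) (r * s)"
      moreover obtain x where "y = T x"
        using \<open>surj T\<close> by (metis surjD)
      ultimately show "y \<in> T ` cball m s"
        using \<open>r > 0\<close> by (simp add: dist_T)
    qed
  qed
  then show ?thesis
    unfolding diskD_def by (simp add: midpoint_T dist_T)
qed

lemma image_eq_if_mem_iff:
  assumes "surj T" "\<And>z. T z \<in> B \<longleftrightarrow> z \<in> A"
  shows "T ` A = B"
proof (intro equalityI subsetI)
  fix y assume "y \<in> B"
  moreover obtain z where "y = T z"
    using \<open>surj T\<close> by (metis surjD)
  ultimately show "y \<in> T ` A"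
    using assms(2) by blast
qed (use assms(2) in auto)

lemma hit_indices_image:
  assumes "inj T" "surj g" "\<And>c. T ` A c = B (g c)"
  shows "{c. B c \<inter> T ` S \<noteq> {}} = g ` {c. A c \<inter> S \<noteq> {}}"
proof -
  have eq: "B (g c) \<inter> T ` S = T ` (A c \<inter> S)" for c
    using assms(1,3) by (simp add: image_Int)
  show ?thesis
  proof (intro equalityI subsetI)
    fix c assume c: "c \<in> {c. B c \<inter> T ` S \<noteq> {}}"
    obtain c0 where "c = g c0"
      using \<open>surj g\<close> by (metis surjD)
    with c eq[of c0] show "c \<in> g ` {c. A c \<inter> S \<noteq> {}}"
      by auto
  next
    fix c assume "c \<in> g ` {c. A c \<inter> S \<noteq> {}}"
    with eq show "c \<in> {c. B c \<inter> T ` S \<noteq> {}}"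
      by auto
  qed
qed

locale unit_grid_symmetry =
  fixes T :: "real \<times> real \<Rightarrow> real \<times> real" and g :: "int \<times> int \<Rightarrow> int \<times> int"
  assumes surj_T: "surj T"
    and dist_T: "\<And>x y. dist (T x) (T y) = dist x y"
    and midpoint_T: "\<And>x y. T (midpoint x y) = midpoint (T x) (T y)"
    and mem_unit_cell_T: "\<And>z c. T z \<in> unit_cell (g c) \<longleftrightarrow> z \<in> unit_cell c"
    and bij_g: "bij g"
    and plus_nb_g: "\<And>c c'. plus_nb (g c) (g c') = plus_nb c c'"
    and times_nb_g: "\<And>c c'. times_nb (g c) (g c') = times_nb c c'"
begin

lemma inj_T: "inj T"
  by (rule injI) (metis dist_T dist_eq_0_iff)

lemma image_unit_cell: "T ` unit_cell c = unit_cell (g c)"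
  using image_eq_if_mem_iff[OF surj_T mem_unit_cell_T] .

lemma unit_cells_hit_image: "unit_cells_hit (T ` S) = g ` unit_cells_hit S"
  unfolding unit_cells_hit_def
  by (rule hit_indices_image[where A = unit_cell and B = unit_cell, OF inj_T bij_is_surj[OF bij_g] image_unit_cell])

lemma disk_chain_image: "T ` disk_chain p1 p2 p3 p4 = disk_chain (T p1) (T p2) (T p3) (T p4)"
  using image_diskD_similarity[OF surj_T, of 1] dist_T midpoint_T
  unfolding disk_chain_def image_Un by simp

lemma hit_count_bound_image_iff:
  "hit_count_bound (g c') (g c) (dist (T p2) (T p3)) (unit_cells_hit (disk_chain (T p1) (T p2) (T p3) (T p4)))
    \<longleftrightarrow> hit_count_bound c' c (dist p2 p3) (unit_cells_hit (disk_chain p1 p2 p3 p4))"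
proof -
  have "inj_on g H" for H
    using bij_g bij_is_inj inj_on_subset by blast
  then show ?thesis
    unfolding disk_chain_image[symmetric] unit_cells_hit_image hit_count_bound_def
    by (simp add: card_image finite_image_iff dist_T plus_nb_g times_nb_g)
qed

lemma hit_count_bound_from_image:
  assumes "g c' = d'" "g c = d"
    and "hit_count_bound d' d (dist (T p2) (T p3)) (unit_cells_hit (disk_chain (T p1) (T p2) (T p3) (T p4)))"
  shows "hit_count_bound c' c (dist p2 p3) (unit_cells_hit (disk_chain p1 p2 p3 p4))"
  using assms hit_count_bound_image_iff by blast

lemma mem_unit_cell_imageI: "z \<in> unit_cell c \<Longrightarrow> g c = d \<Longrightarrow> T z \<in> unit_cell d"
  using mem_unit_cell_T by blast

end

interpretation shift: unit_grid_symmetry "\<lambda>z. z - (of_int (fst m), of_int (snd m))" "\<lambda>c. c - m" for m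
proof
  show "surj (\<lambda>z. z - (of_int (fst m), of_int (snd m)))"
    by (rule surjI[of _ "\<lambda>z. z + (of_int (fst m), of_int (snd m))"]) simp
  show "bij (\<lambda>c::int \<times> int. c - m)"
    by (rule bij_betw_byWitness[of _ "\<lambda>c. c + m"]) auto
qed (auto simp: dist_norm midpoint_def unit_cell_def plus_nb_def times_nb_def algebra_simps)

interpretation reflect_fst: unit_grid_symmetry "\<lambda>z. (1 - fst z, snd z)" "\<lambda>c. (- fst c, snd c)"
proof
  show "surj (\<lambda>z::real \<times> real. (1 - fst z, snd z))"
    by (rule surjI[of _ "\<lambda>z. (1 - fst z, snd z)"]) simp
  show "bij (\<lambda>c::int \<times> int. (- fst c, snd c))"
    by (rule involuntory_imp_bij) simp
qed (auto simp: dist_Pair_Pair dist_real_def midpoint_def unit_cell_def plus_nb_def times_nb_def algebra_simps power2_commute)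

interpretation reflect_snd: unit_grid_symmetry "\<lambda>z. (fst z, 1 - snd z)" "\<lambda>c. (fst c, - snd c)"
proof
  show "surj (\<lambda>z::real \<times> real. (fst z, 1 - snd z))"
    by (rule surjI[of _ "\<lambda>z. (fst z, 1 - snd z)"]) simp
  show "bij (\<lambda>c::int \<times> int. (fst c, - snd c))"
    by (rule involuntory_imp_bij) simp
qed (auto simp: dist_Pair_Pair dist_real_def midpoint_def unit_cell_def plus_nb_def times_nb_def algebra_simps power2_commute)

interpretation swap: unit_grid_symmetry prod.swap prod.swap
proof
  show "bij (prod.swap :: int \<times> int \<Rightarrow> int \<times> int)"
    by (rule involuntory_imp_bij) simp
qed (auto simp: dist_Pair_Pair dist_real_def midpoint_def unit_cell_def plus_nb_def times_nb_def)

lemma hit_count_bound_first_quadrant: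
  assumes "p1 \<in> unit_cell (0, 0)" "p2 \<in> unit_cell (0, 0)" "p3 \<in> unit_cell (i, j)" "p4 \<in> unit_cell (i, j)"
    and "(dist p2 p3)\<^sup>2 \<le> 2" "0 \<le> i" "0 \<le> j"
  shows "hit_count_bound (0, 0) (i, j) (dist p2 p3) (unit_cells_hit (disk_chain p1 p2 p3 p4))"
proof (cases "j \<le> i")
  case True
  then show ?thesis
    using hit_count_bound_first_octant assms by blast
next
  case False
  show ?thesis
  proof (rule swap.hit_count_bound_from_image[where d' = "(0, 0)" and d = "(j, i)"])
    show "hit_count_bound (0, 0) (j, i) (dist (prod.swap p2) (prod.swap p3))
      (unit_cells_hit (disk_chain (prod.swap p1) (prod.swap p2) (prod.swap p3) (prod.swap p4)))"
      using assms False by (intro hit_count_bound_first_octant swap.mem_unit_cell_imageI) (auto simp: swap.dist_T)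
  qed simp_all
qed

lemma hit_count_bound_upper_half:
  assumes "p1 \<in> unit_cell (0, 0)" "p2 \<in> unit_cell (0, 0)" "p3 \<in> unit_cell (i, j)" "p4 \<in> unit_cell (i, j)"
    and "(dist p2 p3)\<^sup>2 \<le> 2" "0 \<le> j"
  shows "hit_count_bound (0, 0) (i, j) (dist p2 p3) (unit_cells_hit (disk_chain p1 p2 p3 p4))"
proof (cases "0 \<le> i")
  case True
  then show ?thesis
    using hit_count_bound_first_quadrant assms by blast
next
  case False
  let ?T = "\<lambda>z::real \<times> real. (1 - fst z, snd z)"
  show ?thesis
  proof (rule reflect_fst.hit_count_bound_from_image[where d' = "(0, 0)" and d = "(- i, j)"])
    show "hit_count_bound (0, 0) (- i, j) (dist (?T p2) (?T p3)) (unit_cells_hit (disk_chain (?T p1) (?T p2) (?T p3) (?T p4)))"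
      using assms False
      by (intro hit_count_bound_first_quadrant reflect_fst.mem_unit_cell_imageI) (auto simp: reflect_fst.dist_T)
  qed simp_all
qed

lemma hit_count_bound_origin:
  assumes "p1 \<in> unit_cell (0, 0)" "p2 \<in> unit_cell (0, 0)" "p3 \<in> unit_cell c" "p4 \<in> unit_cell c"
    and "(dist p2 p3)\<^sup>2 \<le> 2"
  shows "hit_count_bound (0, 0) c (dist p2 p3) (unit_cells_hit (disk_chain p1 p2 p3 p4))"
proof (cases "0 \<le> snd c")
  case True
  then show ?thesis
    using hit_count_bound_upper_half[of p1 p2 p3 "fst c" "snd c" p4] assms by simp
next
  case False
  let ?T = "\<lambda>z::real \<times> real. (fst z, 1 - snd z)"
  show ?thesis
  proof (rule reflect_snd.hit_count_bound_from_image[where d' = "(0, 0)" and d = "(fst c, - snd c)"])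
    show "hit_count_bound (0, 0) (fst c, - snd c) (dist (?T p2) (?T p3))
      (unit_cells_hit (disk_chain (?T p1) (?T p2) (?T p3) (?T p4)))"
      using assms False
      by (intro hit_count_bound_upper_half reflect_snd.mem_unit_cell_imageI) (auto simp: reflect_snd.dist_T)
  qed simp_all
qed

lemma hit_count_bound_unit_grid:
  assumes "p1 \<in> unit_cell c'" "p2 \<in> unit_cell c'" "p3 \<in> unit_cell c" "p4 \<in> unit_cell c"
    and "(dist p2 p3)\<^sup>2 \<le> 2"
  shows "hit_count_bound c' c (dist p2 p3) (unit_cells_hit (disk_chain p1 p2 p3 p4))"
proof -
  let ?T = "\<lambda>z::real \<times> real. z - (of_int (fst c'), of_int (snd c'))"
  have origin: "c' - c' = (0, 0)"
    by (simp add: zero_prod_def)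
  show ?thesis
  proof (rule shift.hit_count_bound_from_image[where m = c', OF origin refl])
    show "hit_count_bound (0, 0) (c - c') (dist (?T p2) (?T p3)) (unit_cells_hit (disk_chain (?T p1) (?T p2) (?T p3) (?T p4)))"
      using assms
      by (intro hit_count_bound_origin shift.mem_unit_cell_imageI[OF _ origin] shift.mem_unit_cell_imageI[OF _ refl])
        (simp_all add: shift.dist_T)
  qed
qed

section \<open>Rescaling to the unit grid\<close>

definition to_unit_grid :: "real \<times> real \<Rightarrow> real \<times> real \<Rightarrow> real \<times> real" where
  "to_unit_grid off z = sqrt 2 *\<^sub>R (z - off)"

lemma surj_to_unit_grid: "surj (to_unit_grid off)"
  by (rule surjI[of _ "\<lambda>w. off + w /\<^sub>R sqrt 2"]) (simp add: to_unit_grid_def)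

lemma dist_to_unit_grid: "dist (to_unit_grid off x) (to_unit_grid off y) = sqrt 2 * dist x y"
  by (simp add: to_unit_grid_def dist_norm flip: scaleR_diff_right)

lemma mem_cell_iff_unit_cell: "to_unit_grid off z \<in> unit_cell c \<longleftrightarrow> z \<in> cell off c"
  unfolding to_unit_grid_def cell_def unit_cell_def side_def by (simp add: field_simps)

lemma image_to_unit_grid_diskD: "to_unit_grid off ` diskD p q = diskD (to_unit_grid off p) (to_unit_grid off q)"
  by (rule image_diskD_similarity[OF surj_to_unit_grid _ dist_to_unit_grid])
    (simp_all add: to_unit_grid_def midpoint_def prod_eq_iff field_simps)

lemma cells_hit_eq_unit_cells_hit: "cells_hit off S = unit_cells_hit (to_unit_grid off ` S)"
proof -
  have "inj (to_unit_grid off)"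
    by (rule injI) (simp add: to_unit_grid_def)
  then show ?thesis
    using hit_indices_image[of "to_unit_grid off" id "cell off" unit_cell S]
      image_eq_if_mem_iff[OF surj_to_unit_grid mem_cell_iff_unit_cell]
    unfolding cells_hit_def unit_cells_hit_def by simp
qed

theorem lemma6:
  fixes off :: "real \<times> real" and c c' :: "int \<times> int" and p1 p2 p3 p4 :: "real \<times> real"
  assumes "p1 \<in> cell off c'" "p2 \<in> cell off c'" "p3 \<in> cell off c" "p4 \<in> cell off c"
  defines "DD \<equiv> diskD p1 p2 \<union> diskD p2 p3 \<union> diskD p3 p4"
  shows "(dist p2 p3 \<le> 1 / sqrt 2 \<longrightarrow> finite (cells_hit off DD) \<and> card (cells_hit off DD) \<le> 8)
       \<and> (dist p2 p3 \<le> 1 \<and> plus_nb c c' \<longrightarrow> finite (cells_hit off DD) \<and> card (cells_hit off DD) \<le> 8)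
       \<and> (dist p2 p3 \<le> 1 \<and> times_nb c c' \<longrightarrow> finite (cells_hit off DD) \<and> card (cells_hit off DD) \<le> 10)
       \<and> (dist p2 p3 \<le> 1 \<and> \<not> nb c c' \<longrightarrow> finite (cells_hit off DD) \<and> card (cells_hit off DD) \<le> 11)"
proof -
  let ?U = "to_unit_grid off"
  have hits: "cells_hit off DD = unit_cells_hit (disk_chain (?U p1) (?U p2) (?U p3) (?U p4))"
    unfolding DD_def cells_hit_eq_unit_cells_hit disk_chain_def image_Un image_to_unit_grid_diskD ..
  have dist: "dist (?U p2) (?U p3) = sqrt 2 * dist p2 p3"
    by (rule dist_to_unit_grid)
  have "hit_count_bound c' c (dist (?U p2) (?U p3)) (cells_hit off DD)" if "dist p2 p3 \<le> 1"
  proof -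
    have "(dist (?U p2) (?U p3))\<^sup>2 \<le> 2"
      using that unfolding dist power_mult_distrib by (simp add: power_le_one)
    then show ?thesis
      unfolding hits by (rule hit_count_bound_unit_grid[rotated 4]) (use assms(1-4) mem_cell_iff_unit_cell in auto)
  qed
  moreover have "dist (?U p2) (?U p3) \<le> 1" if "dist p2 p3 \<le> 1 / sqrt 2"
    using that unfolding dist by (simp add: field_simps)
  moreover have "1 / sqrt 2 \<le> (1::real)"
    by simp
  ultimately show ?thesis
    unfolding hit_count_bound_def nb_def by (smt (verit))
qed

end
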